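(* Let $\alpha\in[0,2)$ and $m\in\mathbb{N}$, and let $f_{2m+1+\alpha}(t)=\mathrm{sgn}(t)|t|^{2m+1+\alpha}$ on $[-1,1]$. Then \[ P_{\mathcal{A}_+}(f_{2m+1+\alpha})=c_mt^{2m+1}+d_mt^{2m+3}, \] where \[ c_m=\frac{(4m+3)(4m+5)}{(4m+3+\alpha)(4m+5+\alpha)}\cdot\frac{2-\alpha}{2},\qquad d_m=\frac{(4m+5)(4m+7)}{(4m+3+\alpha)(4m+5+\alpha)}\cdot\frac{\alpha}{2}. \] Moreover, \[ d(f_{2m+1+\alpha},\mathcal{A}_+)=\frac{\sqrt2\,\alpha(2-\alpha)}{(4m+\alpha+3)(4m+\alpha+5)\sqrt{4m+2\alpha+3}},\qquad \lambda(f_{2m+1+\alpha},\mathcal{A}_+)=\frac{\alpha(2-\alpha)}{(4m+\alpha+3)(4m+\alpha+5)}. \]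
   Context: $\mathbb{N}=\{0,1,2,\dots\}$. $\mathcal{A}_+=\{\sum_{n=0}^\infty a_nt^n : a_n\ge0,\ \text{the series converges in }L^2([-1,1])\}$ (real $L^2$ for Lebesgue measure, convergence of partial sums); it is a closed convex cone and $P_{\mathcal{A}_+}$ denotes the metric projection onto it (the unique nearest point). $d(w,\mathcal{A}_+)=\inf\{\|w-u\|:u\in\mathcal{A}_+\}$ and, for $w\ne0$, $\lambda(w,\mathcal{A}_+)=d(w,\mathcal{A}_+)/\|w\|$, norms in $L^2([-1,1])$. *)

theory Defs
  imports "HOL-Analysis.Analysis"
begin

definition L2I :: "(real \<Rightarrow> real) \<Rightarrow> bool" where
  "L2I f \<longleftrightarrow> set_borel_measurable lborel {-1..1} f
            \<and> set_integrable lborel {-1..1} (\<lambda>t. (f t)^2)"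

definition l2norm :: "(real \<Rightarrow> real) \<Rightarrow> real" where
  "l2norm f = sqrt (LBINT t:{-1..1}. (f t)^2)"

definition Aplus :: "(real \<Rightarrow> real) set" where
  "Aplus = {u. L2I u \<and> (\<exists>a::nat \<Rightarrow> real. (\<forall>n. a n \<ge> 0) \<and>
      (\<lambda>N. l2norm (\<lambda>t. u t - (\<Sum>n<N. a n * t ^ n))) \<longlonglongrightarrow> 0)}"

text \<open>u is the metric projection of w onto A_+: a nearest point, unique up to
  equality almost everywhere on [-1,1] (i.e. as an element of L^2).\<close>

definition is_proj_Aplus :: "(real \<Rightarrow> real) \<Rightarrow> (real \<Rightarrow> real) \<Rightarrow> bool" where
  "is_proj_Aplus w u \<longleftrightarrow> u \<in> Aplus
     \<and> (\<forall>v\<in>Aplus. l2norm (\<lambda>t. w t - u t) \<le> l2norm (\<lambda>t. w t - v t))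
     \<and> (\<forall>v\<in>Aplus. l2norm (\<lambda>t. w t - v t) = l2norm (\<lambda>t. w t - u t)
            \<longrightarrow> (AE t in lborel. t \<in> {-1..1} \<longrightarrow> v t = u t))"

definition dist_Aplus :: "(real \<Rightarrow> real) \<Rightarrow> real" where
  "dist_Aplus w = (INF u\<in>Aplus. l2norm (\<lambda>t. w t - u t))"

definition lambda_Aplus :: "(real \<Rightarrow> real) \<Rightarrow> real" where
  "lambda_Aplus w = dist_Aplus w / l2norm w"

definition fpow :: "real \<Rightarrow> real \<Rightarrow> real" where
  "fpow p t = sgn t * \<bar>t\<bar> powr p"

end

theory Submission
  imports Defs
begin

text \<open>Write p = 2m+1+\<alpha>, u = c t^(2m+1) + d t^(2m+3) and r = f_p - u. The n-th moment of r
  on [-1,1] vanishes for even n and equals 2 g(n) for odd n, where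
  g(x) = 1/(p+x+1) - c/(2m+x+2) - d/(2m+x+4). The coefficients c, d are exactly those for which
  g(x) is a negative multiple of (x-2m-1)(x-2m-3) over a positive denominator, so g vanishes at
  2m+1 and 2m+3 and is nonpositive at every other odd integer. Hence r is orthogonal to u and
  has nonpositive inner product with every monomial, so with the whole cone, in which polynomials
  with nonnegative coefficients are dense; this Kolmogorov-type criterion characterises the
  nearest point. The squared distance ||r||^2 = <r, f_p> is computed from the same moments.\<close>

definition L2_inner :: "(real \<Rightarrow> real) \<Rightarrow> (real \<Rightarrow> real) \<Rightarrow> real" where
  "L2_inner f g = (LBINT t:{-1..1}. f t * g t)"

lemma l2norm_eq_sqrt_L2_inner: "l2norm f = sqrt (L2_inner f f)"
  unfolding l2norm_def L2_inner_def by (simp add: power2_eq_square)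

lemma L2_inner_commute: "L2_inner f g = L2_inner g f"
  unfolding L2_inner_def by (simp add: mult.commute)

lemma L2_inner_self_nonneg: "0 \<le> L2_inner f f"
  unfolding L2_inner_def set_lebesgue_integral_def
  by (rule Bochner_Integration.integral_nonneg) (simp split: split_indicator)

lemma L2I_iff:
  "L2I f \<longleftrightarrow> f \<in> borel_measurable (restrict_space lborel {-1..1})
              \<and> set_integrable lborel {-1..1} (\<lambda>t. (f t)^2)"
  unfolding L2I_def set_borel_measurable_def by (simp add: borel_measurable_restrict_space_iff)

lemma L2I_bounded:
  fixes f :: "real \<Rightarrow> real"
  assumes "f \<in> borel_measurable borel" and "\<And>t. t \<in> {-1..1} \<Longrightarrow> \<bar>f t\<bar> \<le> B"
  shows "L2I f"
proof -
  have "\<bar>f t\<bar>^2 \<le> B^2" if "t \<in> {-1..1}" for t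
    using assms(2)[OF that] by (intro power_mono) auto
  then have "integrable lborel (\<lambda>t. indicator {-1..1} t *\<^sub>R (f t)^2)"
    using assms(1) by (intro integrableI_bounded_set_indicator[where B = "B^2"])
      (auto simp: emeasure_lborel_Icc)
  then show ?thesis
    using assms(1) unfolding L2I_iff set_integrable_def by (simp add: measurable_restrict_space1)
qed

lemma L2I_set_integrable_mult:
  assumes "L2I f" and "L2I g"
  shows "set_integrable lborel {-1..1} (\<lambda>t. f t * g t)"
proof (rule set_integrable_bound)
  show "set_integrable lborel {-1..1} (\<lambda>t. (f t)^2 + (g t)^2)"
    using assms unfolding L2I_iff by (intro set_integral_add) auto
  show "set_borel_measurable lborel {-1..1} (\<lambda>t. f t * g t)"
    using assms unfolding L2I_iff set_borel_measurable_def
    by (subst borel_measurable_restrict_space_iff[symmetric]) auto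
  have "\<bar>f t * g t\<bar> \<le> (f t)^2 + (g t)^2" for t
  proof -
    have "2 * \<bar>f t\<bar> * \<bar>g t\<bar> \<le> \<bar>f t\<bar>^2 + \<bar>g t\<bar>^2"
      by (rule sum_squares_bound)
    moreover have "0 \<le> \<bar>f t\<bar> * \<bar>g t\<bar>"
      by simp
    ultimately show ?thesis
      unfolding abs_mult power2_abs by linarith
  qed
  then show "AE t in lborel. t \<in> {-1..1} \<longrightarrow> norm (f t * g t) \<le> norm ((f t)^2 + (g t)^2)"
    by simp
qed

lemma L2I_add:
  assumes "L2I f" and "L2I g"
  shows "L2I (\<lambda>t. f t + g t)"
proof -
  have "set_integrable lborel {-1..1} (\<lambda>t. (f t)^2 + 2 * (f t * g t) + (g t)^2)"
    using assms L2I_set_integrable_mult[OF assms] unfolding L2I_iff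
    by (intro set_integral_add set_integrable_mult_right) auto
  then show ?thesis
    using assms unfolding L2I_iff by (auto simp: power2_sum algebra_simps)
qed

lemma L2I_scale:
  assumes "L2I f"
  shows "L2I (\<lambda>t. c * f t)"
proof -
  have "set_integrable lborel {-1..1} (\<lambda>t. c^2 * (f t)^2)"
    using assms unfolding L2I_iff by (intro set_integrable_mult_right) auto
  then show ?thesis
    using assms unfolding L2I_iff by (auto simp: power_mult_distrib)
qed

lemma L2I_diff:
  assumes "L2I f" and "L2I g"
  shows "L2I (\<lambda>t. f t - g t)"
  using L2I_add[OF assms(1) L2I_scale[OF assms(2), of "-1"]] by simp

lemma L2I_sum:
  assumes "\<And>i. i \<in> I \<Longrightarrow> L2I (f i)"
  shows "L2I (\<lambda>t. \<Sum>i\<in>I. f i t)"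
  using assms
proof (induction I rule: infinite_finite_induct)
  case (infinite I)
  then show ?case by (simp add: L2I_bounded[where B = 0])
next
  case empty
  then show ?case by (simp add: L2I_bounded[where B = 0])
next
  case (insert i I)
  then show ?case by (simp add: L2I_add)
qed

lemma L2I_monomial: "L2I (\<lambda>t. t ^ n)"
  by (rule L2I_bounded[where B = 1]) (auto simp: power_abs power_le_one)

lemma L2I_fpow:
  assumes "0 \<le> p"
  shows "L2I (fpow p)"
proof (rule L2I_bounded[where B = 1])
  show "fpow p \<in> borel_measurable borel"
    unfolding fpow_def by measurable
  fix t :: real
  assume "t \<in> {-1..1}"
  then have "\<bar>t\<bar> powr p \<le> 1"
    using assms by (intro powr_le1) auto
  then show "\<bar>fpow p t\<bar> \<le> 1"
    unfolding fpow_def by (auto simp: abs_mult sgn_if)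
qed

lemma L2_inner_add_left:
  assumes "L2I f" and "L2I g" and "L2I h"
  shows "L2_inner (\<lambda>t. f t + g t) h = L2_inner f h + L2_inner g h"
  unfolding L2_inner_def
  using L2I_set_integrable_mult[OF assms(1,3)] L2I_set_integrable_mult[OF assms(2,3)]
  by (simp add: distrib_right set_integral_add)

lemma L2_inner_diff_left:
  assumes "L2I f" and "L2I g" and "L2I h"
  shows "L2_inner (\<lambda>t. f t - g t) h = L2_inner f h - L2_inner g h"
  unfolding L2_inner_def
  using L2I_set_integrable_mult[OF assms(1,3)] L2I_set_integrable_mult[OF assms(2,3)]
  by (simp add: left_diff_distrib set_integral_diff)

lemma L2_inner_scale_left: "L2_inner (\<lambda>t. c * f t) h = c * L2_inner f h"
  unfolding L2_inner_def by (simp add: mult.assoc)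

lemma L2_inner_add_right:
  assumes "L2I f" and "L2I g" and "L2I h"
  shows "L2_inner h (\<lambda>t. f t + g t) = L2_inner h f + L2_inner h g"
  using L2_inner_add_left[OF assms] by (simp add: L2_inner_commute)

lemma L2_inner_diff_right:
  assumes "L2I f" and "L2I g" and "L2I h"
  shows "L2_inner h (\<lambda>t. f t - g t) = L2_inner h f - L2_inner h g"
  using L2_inner_diff_left[OF assms] by (simp add: L2_inner_commute)

lemma L2_inner_scale_right: "L2_inner h (\<lambda>t. c * f t) = c * L2_inner h f"
  using L2_inner_scale_left by (simp add: L2_inner_commute)

lemma L2_inner_sum_right:
  assumes "\<And>i. i \<in> I \<Longrightarrow> L2I (f i)" and "L2I h"
  shows "L2_inner h (\<lambda>t. \<Sum>i\<in>I. f i t) = (\<Sum>i\<in>I. L2_inner h (f i))"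
  using assms(1)
proof (induction I rule: infinite_finite_induct)
  case (insert i I)
  then show ?case by (simp add: L2_inner_add_right L2I_sum assms(2))
qed (simp_all add: L2_inner_def)

lemma L2_inner_self_add:
  assumes "L2I f" and "L2I g"
  shows "L2_inner (\<lambda>t. f t + g t) (\<lambda>t. f t + g t)
           = L2_inner f f + 2 * L2_inner f g + L2_inner g g"
  using assms L2I_add[OF assms]
  by (simp add: L2_inner_add_left L2_inner_add_right L2_inner_commute[of g f])

lemma L2_inner_le_Young:
  assumes "L2I f" and "L2I g" and "0 < e"
  shows "L2_inner f g \<le> e / 2 * L2_inner f f + 1 / (2 * e) * L2_inner g g"
proof -
  have pointwise: "f t * g t \<le> e / 2 * (f t * f t) + 1 / (2 * e) * (g t * g t)" for t
    using sum_squares_bound[of "e * f t" "g t"] assms(3)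
    by (simp add: power2_eq_square field_simps)
  have "L2_inner f g \<le> (LBINT t:{-1..1}. e / 2 * (f t * f t) + 1 / (2 * e) * (g t * g t))"
    unfolding L2_inner_def using assms(1,2)
    by (intro set_integral_mono pointwise)
      (auto intro!: set_integral_add set_integrable_mult_right L2I_set_integrable_mult)
  also have "\<dots> = e / 2 * L2_inner f f + 1 / (2 * e) * L2_inner g g"
    unfolding L2_inner_def using L2I_set_integrable_mult assms(1,2)
    by (simp add: set_integral_add set_integral_mult_right)
  finally show ?thesis .
qed

lemma AE_zero_if_L2_inner_self_eq_0:
  assumes "L2I f" and "L2_inner f f = 0"
  shows "AE t in lborel. t \<in> {-1..1} \<longrightarrow> f t = 0"
proof -
  have "integrable lborel (\<lambda>t. indicator {-1..1} t *\<^sub>R (f t * f t))"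
    using L2I_set_integrable_mult[OF assms(1,1)] unfolding set_integrable_def .
  then have "AE t in lborel. indicator {-1..1} t *\<^sub>R (f t * f t) = 0"
    using assms(2) unfolding L2_inner_def set_lebesgue_integral_def
    by (subst (asm) integral_nonneg_eq_0_iff_AE) (auto split: split_indicator)
  then show ?thesis
    by eventually_elim (auto split: split_indicator)
qed

lemma nonpos_if_le_L2_inner_null:
  assumes "L2I r" and "\<And>N. L2I (h N)" and null: "(\<lambda>N. L2_inner (h N) (h N)) \<longlonglongrightarrow> 0"
    and bound: "\<And>N. x \<le> L2_inner r (h N)"
  shows "x \<le> 0"
proof (rule field_le_epsilon)
  fix e :: real
  assume "0 < e"
  define A where "A = L2_inner r r"
  define \<epsilon> where "\<epsilon> = 2 * e / (A + 1)"
  have "0 \<le> A"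
    unfolding A_def by (rule L2_inner_self_nonneg)
  then have "0 < \<epsilon>"
    using \<open>0 < e\<close> by (simp add: \<epsilon>_def)
  have "(\<lambda>N. \<epsilon> / 2 * A + 1 / (2 * \<epsilon>) * L2_inner (h N) (h N)) \<longlonglongrightarrow> \<epsilon> / 2 * A + 1 / (2 * \<epsilon>) * 0"
    by (intro tendsto_add tendsto_const tendsto_mult_left null)
  moreover have "x \<le> \<epsilon> / 2 * A + 1 / (2 * \<epsilon>) * L2_inner (h N) (h N)" for N
    using bound[of N] L2_inner_le_Young[OF assms(1) assms(2)[of N] \<open>0 < \<epsilon>\<close>]
    unfolding A_def by linarith
  ultimately have "x \<le> \<epsilon> / 2 * A"
    using LIMSEQ_le_const by fastforce
  also have "\<dots> = e * (A / (A + 1))"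
    using \<open>0 \<le> A\<close> by (simp add: \<epsilon>_def field_simps)
  also have "\<dots> \<le> e"
    using \<open>0 < e\<close> \<open>0 \<le> A\<close> by (intro mult_left_le) auto
  finally show "x \<le> 0 + e"
    by simp
qed

lemma L2_inner_Aplus_nonpos:
  assumes "L2I r" and monomials: "\<And>n. L2_inner r (\<lambda>t. t ^ n) \<le> 0" and "v \<in> Aplus"
  shows "L2_inner r v \<le> 0"
proof -
  obtain a where a_nonneg: "\<And>n. 0 \<le> a n" and "L2I v"
    and lim: "(\<lambda>N. l2norm (\<lambda>t. v t - (\<Sum>n<N. a n * t ^ n))) \<longlonglongrightarrow> 0"
    using assms(3) unfolding Aplus_def by blast
  define S where "S N t = (\<Sum>n<N. a n * t ^ n)" for N t
  define h where "h N t = v t - S N t" for N t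
  have L2I_S: "L2I (S N)" for N
    unfolding S_def by (intro L2I_sum L2I_scale L2I_monomial)
  have L2I_h: "L2I (h N)" for N
    unfolding h_def using \<open>L2I v\<close> L2I_S by (rule L2I_diff)
  have "L2_inner r (S N) \<le> 0" for N
    unfolding S_def using assms(1) a_nonneg monomials
    by (simp add: L2_inner_sum_right L2I_scale L2I_monomial L2_inner_scale_right
        sum_nonpos mult_nonneg_nonpos)
  moreover have "L2_inner r v = L2_inner r (h N) + L2_inner r (S N)" for N
    using L2_inner_add_right[OF L2I_h[of N] L2I_S[of N] assms(1)] by (simp add: h_def)
  ultimately have "L2_inner r v \<le> L2_inner r (h N)" for N
    by (metis add_le_same_cancel1)
  moreover have "(\<lambda>N. (sqrt (L2_inner (h N) (h N)))^2) \<longlonglongrightarrow> 0^2"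
    using lim unfolding l2norm_eq_sqrt_L2_inner h_def S_def by (intro tendsto_power)
  then have "(\<lambda>N. L2_inner (h N) (h N)) \<longlonglongrightarrow> 0"
    by (simp add: L2_inner_self_nonneg)
  ultimately show ?thesis
    using assms(1) L2I_h by (intro nonpos_if_le_L2_inner_null) auto
qed

lemma L2_inner_Pythagoras_le:
  assumes "L2I w" and "L2I u" and "v \<in> Aplus"
    and orthogonal: "L2_inner (\<lambda>t. w t - u t) u = 0"
    and monomials: "\<And>n. L2_inner (\<lambda>t. w t - u t) (\<lambda>t. t ^ n) \<le> 0"
  shows "L2_inner (\<lambda>t. w t - u t) (\<lambda>t. w t - u t) + L2_inner (\<lambda>t. u t - v t) (\<lambda>t. u t - v t)
    \<le> L2_inner (\<lambda>t. w t - v t) (\<lambda>t. w t - v t)"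
proof -
  have "L2I v"
    using \<open>v \<in> Aplus\<close> unfolding Aplus_def by blast
  have L2I_res: "L2I (\<lambda>t. w t - u t)"
    using \<open>L2I w\<close> \<open>L2I u\<close> by (rule L2I_diff)
  have "L2_inner (\<lambda>t. w t - u t) (\<lambda>t. u t - v t) = - L2_inner (\<lambda>t. w t - u t) v"
    using L2_inner_diff_right[OF \<open>L2I u\<close> \<open>L2I v\<close> L2I_res] orthogonal by simp
  also have "\<dots> \<ge> 0"
    using L2_inner_Aplus_nonpos[OF L2I_res monomials \<open>v \<in> Aplus\<close>] by simp
  finally show ?thesis
    using L2_inner_self_add[OF L2I_res L2I_diff[OF \<open>L2I u\<close> \<open>L2I v\<close>]] by simp
qed

lemma is_proj_AplusI:
  assumes "L2I w" and "u \<in> Aplus"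
    and orthogonal: "L2_inner (\<lambda>t. w t - u t) u = 0"
    and monomials: "\<And>n. L2_inner (\<lambda>t. w t - u t) (\<lambda>t. t ^ n) \<le> 0"
  shows "is_proj_Aplus w u"
proof -
  have "L2I u"
    using \<open>u \<in> Aplus\<close> unfolding Aplus_def by blast
  note pythagoras = L2_inner_Pythagoras_le[OF \<open>L2I w\<close> \<open>L2I u\<close> _ orthogonal monomials]
  have nearest: "l2norm (\<lambda>t. w t - u t) \<le> l2norm (\<lambda>t. w t - v t)" if "v \<in> Aplus" for v
    using pythagoras[OF that] L2_inner_self_nonneg[of "\<lambda>t. u t - v t"]
    unfolding l2norm_eq_sqrt_L2_inner by (intro real_sqrt_le_mono) linarith
  have unique: "AE t in lborel. t \<in> {-1..1} \<longrightarrow> v t = u t"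
    if "v \<in> Aplus" and "l2norm (\<lambda>t. w t - v t) = l2norm (\<lambda>t. w t - u t)" for v
  proof -
    have "L2I v"
      using that(1) unfolding Aplus_def by blast
    have "L2_inner (\<lambda>t. u t - v t) (\<lambda>t. u t - v t) = 0"
      using pythagoras[OF that(1)] that(2)
      unfolding l2norm_eq_sqrt_L2_inner by (simp add: L2_inner_self_nonneg)
        (use L2_inner_self_nonneg[of "\<lambda>t. u t - v t"] in linarith)
    then have "AE t in lborel. t \<in> {-1..1} \<longrightarrow> u t - v t = 0"
      using \<open>L2I u\<close> \<open>L2I v\<close> by (intro AE_zero_if_L2_inner_self_eq_0 L2I_diff)
    then show ?thesis
      by eventually_elim simp
  qed
  show ?thesis
    unfolding is_proj_Aplus_def using \<open>u \<in> Aplus\<close> nearest unique by blast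
qed

lemma dist_Aplus_eq_if_is_proj:
  assumes "is_proj_Aplus w u"
  shows "dist_Aplus w = l2norm (\<lambda>t. w t - u t)"
  unfolding dist_Aplus_def
proof (rule cInf_eq_minimum)
  show "l2norm (\<lambda>t. w t - u t) \<in> (\<lambda>v. l2norm (\<lambda>t. w t - v t)) ` Aplus"
    using assms unfolding is_proj_Aplus_def by blast
  show "l2norm (\<lambda>t. w t - u t) \<le> x" if "x \<in> (\<lambda>v. l2norm (\<lambda>t. w t - v t)) ` Aplus" for x
    using assms that unfolding is_proj_Aplus_def by blast
qed

lemma polynomial_in_Aplus:
  assumes "finite I" and "\<And>n. n \<in> I \<Longrightarrow> 0 \<le> a n"
  shows "(\<lambda>t. \<Sum>n\<in>I. a n * t ^ n) \<in> Aplus"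
proof -
  define b where "b n = (if n \<in> I then a n else 0)" for n
  obtain N0 where "I \<subseteq> {..<N0}"
    using \<open>finite I\<close> finite_nat_iff_bounded by blast
  then have partial_sums: "(\<Sum>n<N. b n * t ^ n) = (\<Sum>n\<in>I. a n * t ^ n)" if "N0 \<le> N" for N t
    using that unfolding b_def by (intro sum.mono_neutral_cong_right) auto
  then have "\<forall>N\<ge>N0. l2norm (\<lambda>t. (\<Sum>n\<in>I. a n * t ^ n) - (\<Sum>n<N. b n * t ^ n)) = 0"
    by (auto simp: partial_sums l2norm_def)
  then have "(\<lambda>N. l2norm (\<lambda>t. (\<Sum>n\<in>I. a n * t ^ n) - (\<Sum>n<N. b n * t ^ n))) \<longlonglongrightarrow> 0"
    by (intro tendsto_eventually) (auto simp: eventually_sequentially)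
  moreover have "0 \<le> b n" for n
    using assms(2) by (simp add: b_def)
  moreover have "L2I (\<lambda>t. \<Sum>n\<in>I. a n * t ^ n)"
    by (intro L2I_sum L2I_scale L2I_monomial)
  ultimately show ?thesis
    unfolding Aplus_def by blast
qed

lemma L2_inner_monomials:
  "L2_inner (\<lambda>t. t ^ k) (\<lambda>t. t ^ n) = (1 + (-1) ^ (k + n)) / (k + n + 1)"
proof -
  have "L2_inner (\<lambda>t. t ^ k) (\<lambda>t. t ^ n) = (\<integral>t. t ^ (k + n) * indicator {-1..1} t \<partial>lborel)"
    unfolding L2_inner_def set_lebesgue_integral_def by (simp add: power_add mult.commute)
  also have "\<dots> = (1 ^ Suc (k + n) - (-1) ^ Suc (k + n)) / Suc (k + n)"
    by (rule integral_power) simp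
  finally show ?thesis
    by simp
qed

lemma set_integral_Icc_symmetric:
  fixes f :: "real \<Rightarrow> real"
  assumes "set_integrable lborel {-1..1} f" and "((\<lambda>t. f t + f (-t)) has_integral I) {0..1}"
  shows "(LBINT t:{-1..1}. f t) = I"
proof -
  have f_int: "f integrable_on {-1..1}"
    using assms(1) by (rule set_borel_integral_eq_integral(1))
  have "f integrable_on {-1..0}" and "f integrable_on {0..1}"
    by (rule integrable_on_subinterval[OF f_int]; simp)+
  then have "(\<lambda>t. f (-t)) integrable_on {0..1}"
    using Henstock_Kurzweil_Integration.integrable_reflect_real[where f = f and a = "-1" and b = 0]
    by simp
  have "(LBINT t:{-1..1}. f t) = integral {-1..0} f + integral {0..1} f"
    using set_borel_integral_eq_integral(2)[OF assms(1)]
      Henstock_Kurzweil_Integration.integral_combine[OF _ _ f_int] by simp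
  also have "integral {-1..0} f = integral {0..1} (\<lambda>t. f (-t))"
    using Henstock_Kurzweil_Integration.integral_reflect_real[where f = f and a = "-1" and b = 0]
    by simp
  also have "integral {0..1} (\<lambda>t. f (-t)) + integral {0..1} f
      = integral {0..1} (\<lambda>t. f t + f (-t))"
    using integral_add[OF \<open>f integrable_on {0..1}\<close> \<open>(\<lambda>t. f (-t)) integrable_on {0..1}\<close>] by simp
  also have "\<dots> = I"
    using assms(2) by (rule integral_unique)
  finally show ?thesis .
qed

lemma fpow_minus: "fpow p (- t) = - fpow p t"
  unfolding fpow_def by simp

lemma fpow_0: "fpow p 0 = 0"
  unfolding fpow_def by simp

lemma fpow_pos: "0 < t \<Longrightarrow> fpow p t = t powr p"
  unfolding fpow_def by simp

lemma L2_inner_fpow_monomial: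
  assumes "0 < p"
  shows "L2_inner (fpow p) (\<lambda>t. t ^ n) = (1 - (-1) ^ n) / (p + n + 1)"
  unfolding L2_inner_def
proof (rule set_integral_Icc_symmetric)
  show "set_integrable lborel {-1..1} (\<lambda>t. fpow p t * t ^ n)"
    using assms by (intro L2I_set_integrable_mult L2I_fpow L2I_monomial) simp
  have "((\<lambda>t. (1 - (-1) ^ n) * t powr (p + n)) has_integral (1 - (-1) ^ n) / (p + n + 1)) {0..1}"
    using has_integral_mult_right[OF has_integral_powr_from_0[of "p + n" 1]] assms by simp
  moreover have "(1 - (-1) ^ n) * t powr (p + n) = fpow p t * t ^ n + fpow p (- t) * (- t) ^ n"
    if "t \<in> {0..1}" for t :: real
    using that assms
    by (cases "t = 0")
      (auto simp: fpow_0 fpow_minus fpow_pos powr_add powr_realpow power_minus' algebra_simps)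
  ultimately show "((\<lambda>t. fpow p t * t ^ n + fpow p (- t) * (- t) ^ n)
      has_integral (1 - (-1) ^ n) / (p + n + 1)) {0..1}"
    by (rule has_integral_eq[rotated])
qed

lemma L2_inner_fpow_self:
  assumes "0 < p"
  shows "L2_inner (fpow p) (fpow p) = 2 / (2 * p + 1)"
  unfolding L2_inner_def
proof (rule set_integral_Icc_symmetric)
  show "set_integrable lborel {-1..1} (\<lambda>t. fpow p t * fpow p t)"
    using assms by (intro L2I_set_integrable_mult L2I_fpow) simp_all
  have "((\<lambda>t. 2 * t powr (2 * p)) has_integral 2 / (2 * p + 1)) {0..1}"
    using has_integral_mult_right[OF has_integral_powr_from_0[of "2 * p" 1]] assms by simp
  moreover have "2 * t powr (2 * p) = fpow p t * fpow p t + fpow p (- t) * fpow p (- t)"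
    if "t \<in> {0..1}" for t :: real
    using that assms
    by (cases "t = 0") (auto simp: fpow_0 fpow_minus fpow_pos powr_add[symmetric])
  ultimately show "((\<lambda>t. fpow p t * fpow p t + fpow p (- t) * fpow p (- t))
      has_integral 2 / (2 * p + 1)) {0..1}"
    by (rule has_integral_eq[rotated])
qed

locale odd_power_projection =
  fixes \<alpha> :: real and m :: nat and c d :: real
  assumes \<alpha>_nonneg: "0 \<le> \<alpha>" and \<alpha>_less_2: "\<alpha> < 2"
    and c_eq: "c = ((4*real m+3)*(4*real m+5)) / ((4*real m+3+\<alpha>)*(4*real m+5+\<alpha>)) * ((2-\<alpha>)/2)"
    and d_eq: "d = ((4*real m+5)*(4*real m+7)) / ((4*real m+3+\<alpha>)*(4*real m+5+\<alpha>)) * (\<alpha>/2)"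
begin

definition p :: real where
  "p = 2 * real m + 1 + \<alpha>"

definition u :: "real \<Rightarrow> real" where
  "u = (\<lambda>t. c * t ^ (2*m+1) + d * t ^ (2*m+3))"

definition moment_gap :: "real \<Rightarrow> real" where
  "moment_gap x = 1 / (p + x + 1) - c / (2 * real m + x + 2) - d / (2 * real m + x + 4)"

lemma p_pos: "0 < p"
  using \<alpha>_nonneg by (simp add: p_def)

lemma c_nonneg: "0 \<le> c"
  using \<alpha>_nonneg \<alpha>_less_2 by (simp add: c_eq)

lemma d_nonneg: "0 \<le> d"
  using \<alpha>_nonneg by (simp add: d_eq)

lemma L2I_u: "L2I u"
  unfolding u_def by (intro L2I_add L2I_scale L2I_monomial)

lemma u_in_Aplus: "u \<in> Aplus"
proof -
  have "u = (\<lambda>t. \<Sum>n\<in>{2*m+1, 2*m+3}. (if n = 2*m+1 then c else d) * t ^ n)"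
    by (simp add: u_def)
  also have "\<dots> \<in> Aplus"
    using c_nonneg d_nonneg by (intro polynomial_in_Aplus) auto
  finally show ?thesis .
qed

lemma L2_inner_u_right:
  assumes "L2I h"
  shows "L2_inner h u = c * L2_inner h (\<lambda>t. t ^ (2*m+1)) + d * L2_inner h (\<lambda>t. t ^ (2*m+3))"
  unfolding u_def
  by (simp only: L2_inner_add_right[OF L2I_scale[OF L2I_monomial] L2I_scale[OF L2I_monomial] assms]
      L2_inner_scale_right)

lemma L2_inner_residual_monomial:
  "L2_inner (\<lambda>t. fpow p t - u t) (\<lambda>t. t ^ n) = (1 - (-1) ^ n) * moment_gap n"
proof -
  have "L2_inner (\<lambda>t. fpow p t - u t) (\<lambda>t. t ^ n)
      = L2_inner (fpow p) (\<lambda>t. t ^ n) - L2_inner u (\<lambda>t. t ^ n)"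
    using p_pos by (intro L2_inner_diff_left L2I_fpow L2I_u L2I_monomial) simp
  also have "L2_inner u (\<lambda>t. t ^ n)
      = c * L2_inner (\<lambda>t. t ^ n) (\<lambda>t. t ^ (2*m+1)) + d * L2_inner (\<lambda>t. t ^ n) (\<lambda>t. t ^ (2*m+3))"
    using L2_inner_u_right[OF L2I_monomial] by (simp add: L2_inner_commute[of u])
  also have "\<dots> = (1 - (-1) ^ n) * (c / (2 * real m + n + 2) + d / (2 * real m + n + 4))"
    unfolding L2_inner_monomials
    by (simp add: power_add algebra_simps add_divide_distrib diff_divide_distrib)
  finally show ?thesis
    unfolding L2_inner_fpow_monomial[OF p_pos] moment_gap_def by (simp add: algebra_simps)
qed

lemma moment_gap_factorization:
  assumes "0 \<le> x"
  shows "moment_gap x = - (\<alpha> * (2 - \<alpha>) / ((4*real m+3+\<alpha>) * (4*real m+5+\<alpha>)))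
      * ((x - 2*real m - 1) * (x - 2*real m - 3))
      / ((p + x + 1) * (2*real m + x + 2) * (2*real m + x + 4))"
proof -
  \<comment> \<open>Naming the denominators lets field_simps clear them without expanding them first;
    algebra then checks the resulting polynomial identity.\<close>
  define D1 D2 q1 q2 q3 where "D1 = 4*real m+3+\<alpha>" and "D2 = 4*real m+5+\<alpha>"
    and "q1 = p + x + 1" and "q2 = 2*real m + x + 2" and "q3 = 2*real m + x + 4"
  have "D1 \<noteq> 0" "D2 \<noteq> 0" "q1 \<noteq> 0" "q2 \<noteq> 0" "q3 \<noteq> 0"
    using assms \<alpha>_nonneg unfolding D1_def D2_def q1_def q2_def q3_def p_def by linarith+
  then have "1 / q1 - (4*real m+3)*(4*real m+5) / (D1*D2) * ((2-\<alpha>)/2) / q2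
        - (4*real m+5)*(4*real m+7) / (D1*D2) * (\<alpha>/2) / q3
      = - (\<alpha> * (2 - \<alpha>) / (D1 * D2)) * ((x - 2*real m - 1) * (x - 2*real m - 3)) / (q1 * q2 * q3)"
    by (simp add: field_simps) (use D1_def D2_def q1_def q2_def q3_def p_def in algebra)
  then show ?thesis
    unfolding moment_gap_def unfolding c_eq d_eq D1_def D2_def q1_def q2_def q3_def .
qed

lemma moment_gap_nonpos:
  fixes n :: nat
  assumes "odd n"
  shows "moment_gap n \<le> 0"
proof -
  obtain b where n: "n = 2*b + 1"
    using assms by (rule oddE)
  have "0 \<le> (real n - 2*real m - 1) * (real n - 2*real m - 3)"
  proof (cases "b \<le> m")
    case True
    then show ?thesis
      unfolding n by (intro mult_nonpos_nonpos) auto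
  next
    case False
    then show ?thesis
      unfolding n by (intro mult_nonneg_nonneg) auto
  qed
  then show ?thesis
    using \<alpha>_nonneg \<alpha>_less_2 p_pos
    by (simp add: moment_gap_factorization divide_nonneg_nonneg mult_nonneg_nonneg)
qed

lemma moment_gap_roots: "moment_gap (2*real m + 1) = 0" "moment_gap (2*real m + 3) = 0"
  by (simp_all add: moment_gap_factorization)

lemma L2_inner_residual_u: "L2_inner (\<lambda>t. fpow p t - u t) u = 0"
proof -
  have "L2I (\<lambda>t. fpow p t - u t)"
    using p_pos by (intro L2I_diff L2I_fpow L2I_u) simp
  then have "L2_inner (\<lambda>t. fpow p t - u t) u
      = c * L2_inner (\<lambda>t. fpow p t - u t) (\<lambda>t. t ^ (2*m+1))
        + d * L2_inner (\<lambda>t. fpow p t - u t) (\<lambda>t. t ^ (2*m+3))"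
    by (rule L2_inner_u_right)
  also have "\<dots> = 0"
    unfolding L2_inner_residual_monomial using moment_gap_roots by (simp add: add.commute)
  finally show ?thesis .
qed

lemma is_proj_Aplus_fpow: "is_proj_Aplus (fpow p) u"
proof (rule is_proj_AplusI)
  show "L2I (fpow p)"
    using p_pos by (intro L2I_fpow) simp
  show "L2_inner (\<lambda>t. fpow p t - u t) (\<lambda>t. t ^ n) \<le> 0" for n
    using moment_gap_nonpos[of n] by (cases "even n") (simp_all add: L2_inner_residual_monomial)
qed (use u_in_Aplus L2_inner_residual_u in simp_all)

lemma residual_norm_identity:
  "2 / (2 * p + 1) - 2 * c / (p + 2*real m + 2) - 2 * d / (p + 2*real m + 4)
     = 2 * \<alpha>^2 * (2-\<alpha>)^2 / ((4*real m+\<alpha>+3)^2 * (4*real m+\<alpha>+5)^2 * (4*real m+2*\<alpha>+3))"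
proof -
  define D1 D2 E1 E2 Y q1 q2 Z where "D1 = 4*real m+3+\<alpha>" and "D2 = 4*real m+5+\<alpha>"
    and "E1 = 4*real m+\<alpha>+3" and "E2 = 4*real m+\<alpha>+5" and "Y = 2 * p + 1"
    and "q1 = p + 2*real m + 2" and "q2 = p + 2*real m + 4" and "Z = 4*real m+2*\<alpha>+3"
  have "D1 \<noteq> 0" "D2 \<noteq> 0" "E1 \<noteq> 0" "E2 \<noteq> 0" "Y \<noteq> 0" "q1 \<noteq> 0" "q2 \<noteq> 0" "Z \<noteq> 0"
    using \<alpha>_nonneg p_pos
    unfolding D1_def D2_def E1_def E2_def Y_def q1_def q2_def Z_def by linarith+
  then have "2 / Y - 2 * ((4*real m+3)*(4*real m+5) / (D1*D2) * ((2-\<alpha>)/2)) / q1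
        - 2 * ((4*real m+5)*(4*real m+7) / (D1*D2) * (\<alpha>/2)) / q2
      = 2 * \<alpha>^2 * (2-\<alpha>)^2 / (E1^2 * E2^2 * Z)"
    by (simp add: field_simps)
      (use D1_def D2_def E1_def E2_def Y_def q1_def q2_def Z_def p_def in algebra)
  then show ?thesis
    unfolding c_eq d_eq D1_def D2_def E1_def E2_def Y_def q1_def q2_def Z_def .
qed

lemma L2_inner_residual_self:
  "L2_inner (\<lambda>t. fpow p t - u t) (\<lambda>t. fpow p t - u t)
     = 2 * \<alpha>^2 * (2-\<alpha>)^2 / ((4*real m+\<alpha>+3)^2 * (4*real m+\<alpha>+5)^2 * (4*real m+2*\<alpha>+3))"
proof -
  have L2I_w: "L2I (fpow p)"
    using p_pos by (intro L2I_fpow) simp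
  have "L2_inner (\<lambda>t. fpow p t - u t) (\<lambda>t. fpow p t - u t)
      = L2_inner (fpow p) (\<lambda>t. fpow p t - u t) - L2_inner u (\<lambda>t. fpow p t - u t)"
    using L2I_w L2I_u by (intro L2_inner_diff_left L2I_diff)
  also have "\<dots> = L2_inner (fpow p) (fpow p) - L2_inner (fpow p) u"
    using L2_inner_residual_u L2_inner_diff_right[OF L2I_w L2I_u L2I_w]
    by (simp add: L2_inner_commute[of u])
  also have "L2_inner (fpow p) u
      = c * L2_inner (fpow p) (\<lambda>t. t ^ (2*m+1)) + d * L2_inner (fpow p) (\<lambda>t. t ^ (2*m+3))"
    using L2I_w by (rule L2_inner_u_right)
  also have "L2_inner (fpow p) (fpow p) - \<dots>
      = 2 / (2 * p + 1) - 2 * c / (p + 2*real m + 2) - 2 * d / (p + 2*real m + 4)"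
    unfolding L2_inner_fpow_self[OF p_pos] L2_inner_fpow_monomial[OF p_pos]
    by (simp add: algebra_simps)
  finally show ?thesis
    unfolding residual_norm_identity .
qed

lemma dist_Aplus_fpow:
  "dist_Aplus (fpow p)
     = sqrt 2 * \<alpha> * (2-\<alpha>) / ((4*real m+\<alpha>+3) * (4*real m+\<alpha>+5) * sqrt (4*real m+2*\<alpha>+3))"
  unfolding dist_Aplus_eq_if_is_proj[OF is_proj_Aplus_fpow] l2norm_eq_sqrt_L2_inner
    L2_inner_residual_self
  using \<alpha>_nonneg \<alpha>_less_2 by (simp add: real_sqrt_mult real_sqrt_divide abs_of_nonneg)

lemma lambda_Aplus_fpow:
  "lambda_Aplus (fpow p) = \<alpha> * (2-\<alpha>) / ((4*real m+\<alpha>+3) * (4*real m+\<alpha>+5))"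
proof -
  have "l2norm (fpow p) = sqrt 2 / sqrt (4*real m+2*\<alpha>+3)"
    unfolding l2norm_eq_sqrt_L2_inner L2_inner_fpow_self[OF p_pos] unfolding p_def
    by (simp add: real_sqrt_divide algebra_simps)
  moreover have "0 < 4*real m+2*\<alpha>+3"
    using \<alpha>_nonneg by simp
  ultimately show ?thesis
    unfolding lambda_Aplus_def dist_Aplus_fpow by simp
qed

end

theorem proposition1p8:
  fixes \<alpha> :: real and m :: nat
  assumes "0 \<le> \<alpha>" and "\<alpha> < 2"
  defines "c \<equiv> ((4*real m+3)*(4*real m+5)) / ((4*real m+3+\<alpha>)*(4*real m+5+\<alpha>)) * ((2-\<alpha>)/2)"
      and "d \<equiv> ((4*real m+5)*(4*real m+7)) / ((4*real m+3+\<alpha>)*(4*real m+5+\<alpha>)) * (\<alpha>/2)"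
  shows "is_proj_Aplus (fpow (2*real m+1+\<alpha>)) (\<lambda>t. c * t^(2*m+1) + d * t^(2*m+3))
    \<and> dist_Aplus (fpow (2*real m+1+\<alpha>)) =
           sqrt 2 * \<alpha> * (2-\<alpha>) / ((4*real m+\<alpha>+3)*(4*real m+\<alpha>+5)* sqrt (4*real m+2*\<alpha>+3))
    \<and> lambda_Aplus (fpow (2*real m+1+\<alpha>)) = \<alpha> * (2-\<alpha>) / ((4*real m+\<alpha>+3)*(4*real m+\<alpha>+5))"
proof -
  interpret odd_power_projection \<alpha> m c d
    using assms by unfold_locales (simp_all add: c_def d_def)
  show ?thesis
    using is_proj_Aplus_fpow dist_Aplus_fpow lambda_Aplus_fpow unfolding p_def u_def by simp
qed

end
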